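(* Let $T$ be an operator function on an interval $\Delta$ satisfying (A1)–(A3). Let $\lambda_1,\dots,\lambda_m$ be eigenvalues of $T$ with eigenvectors $u_1,\dots,u_m$ (i.e. $u_j\ne0$, $T(\lambda_j)u_j=0$), and let $\mu,\nu\in\Delta$ with $\mu\le\lambda_1\le\dots\le\lambda_m\le\nu$. Let $y\in\mathcal D$ and $c_1,\dots,c_m\in\mathbb C$. (i) If $\mathfrak t(\nu)[y]\ge0$, then $\mathfrak t(\mu)[y+c_1u_1+\dots+c_mu_m]\ge0$. (ii) If $\mathfrak t(\mu)[y]\le0$, then $\mathfrak t(\nu)[y+c_1u_1+\dots+c_mu_m]\le0$.
   Context: For a self-adjoint operator $A$ with spectral measure $E$, its form is $\mathfrak a[x,y]=\int_{\mathbb R}\mu\,d\langle E(\mu)x,y\rangle$ on $\mathrm{dom}(|A|^{1/2})$, $\mathfrak a[x]:=\mathfrak a[x,x]$. (A1) $T(\lambda)$ self-adjoint for each $\lambda\in\Delta$, with form $\mathfrak t(\lambda)$; (A2) $\mathrm{dom}\,\mathfrak t(\lambda)=:\mathcal D$ independent of $\lambda$; (A3) for each $x\in\mathcal D\setminus\{0\}$, $\lambda\mapsto\mathfrak t(\lambda)[x]$ is continuous, and if $\mathfrak t(\lambda_0)[x]=0$ then $\mathfrak t(\lambda)[x]>0$ for $\lambda<\lambda_0$ and $<0$ for $\lambda>\lambda_0$ ($\lambda\in\Delta$). *)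

theory Defs
  imports "HOL-Analysis.Analysis"
begin

definition hnorm :: "('h \<Rightarrow> 'h \<Rightarrow> complex) \<Rightarrow> 'h \<Rightarrow> real" where
  "hnorm ip x = sqrt (Re (ip x x))"

definition complex_hilbert ::
  "(complex \<Rightarrow> 'h::ab_group_add \<Rightarrow> 'h) \<Rightarrow> ('h \<Rightarrow> 'h \<Rightarrow> complex) \<Rightarrow> bool" where
  "complex_hilbert sm ip \<longleftrightarrow>
     (\<forall>a x y. sm a (x + y) = sm a x + sm a y) \<and>
     (\<forall>a b x. sm (a + b) x = sm a x + sm b x) \<and>
     (\<forall>a b x. sm a (sm b x) = sm (a * b) x) \<and>
     (\<forall>x. sm 1 x = x) \<and>
     (\<forall>x y z. ip (x + y) z = ip x z + ip y z) \<and>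
     (\<forall>a x y. ip (sm a x) y = a * ip x y) \<and>
     (\<forall>x y. ip y x = cnj (ip x y)) \<and>
     (\<forall>x. Re (ip x x) \<ge> 0) \<and>
     (\<forall>x. ip x x = 0 \<longrightarrow> x = 0) \<and>
     (\<forall>X :: nat \<Rightarrow> 'h.
        (\<forall>e>0. \<exists>N. \<forall>m\<ge>N. \<forall>n\<ge>N. hnorm ip (X m - X n) < e) \<longrightarrow>
        (\<exists>L. (\<lambda>n. hnorm ip (X n - L)) \<longlonglongrightarrow> 0))"

definition spectral_measure ::
  "(complex \<Rightarrow> 'h::ab_group_add \<Rightarrow> 'h) \<Rightarrow> ('h \<Rightarrow> 'h \<Rightarrow> complex) \<Rightarrow> (real set \<Rightarrow> 'h \<Rightarrow> 'h) \<Rightarrow> bool" where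
  "spectral_measure sm ip E \<longleftrightarrow>
     (\<forall>B\<in>sets borel. \<forall>x y. E B (x + y) = E B x + E B y) \<and>
     (\<forall>B\<in>sets borel. \<forall>a x. E B (sm a x) = sm a (E B x)) \<and>
     (\<forall>B\<in>sets borel. \<forall>x. E B (E B x) = E B x) \<and>
     (\<forall>B\<in>sets borel. \<forall>x y. ip (E B x) y = ip x (E B y)) \<and>
     (\<forall>B\<in>sets borel. \<forall>C\<in>sets borel. \<forall>x. E (B \<inter> C) x = E B (E C x)) \<and>
     (\<forall>x. E {} x = 0) \<and>
     (\<forall>x. E UNIV x = x) \<and>
     (\<forall>Bs :: nat \<Rightarrow> real set. range Bs \<subseteq> sets borel \<longrightarrow> disjoint_family Bs \<longrightarrow>
        (\<forall>x y. (\<lambda>n. ip (E (Bs n) x) y) sums ip (E (\<Union>(range Bs)) x) y))"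

definition spec_meas :: "('h \<Rightarrow> 'h \<Rightarrow> complex) \<Rightarrow> (real set \<Rightarrow> 'h \<Rightarrow> 'h) \<Rightarrow> 'h \<Rightarrow> real measure" where
  "spec_meas ip E x = measure_of UNIV (sets borel) (\<lambda>B. ennreal (Re (ip (E B x) x)))"

text \<open>Domain of the form: dom(|A|^(1/2)) = {x. \<integral>|\<mu>| d\<langle>E(\<mu>)x,x\<rangle> < \<infinity>}.\<close>

definition form_dom :: "('h \<Rightarrow> 'h \<Rightarrow> complex) \<Rightarrow> (real set \<Rightarrow> 'h \<Rightarrow> 'h) \<Rightarrow> 'h set" where
  "form_dom ip E = {x. integrable (spec_meas ip E x) (\<lambda>\<mu>. \<mu>)}"

definition form_q :: "('h \<Rightarrow> 'h \<Rightarrow> complex) \<Rightarrow> (real set \<Rightarrow> 'h \<Rightarrow> 'h) \<Rightarrow> 'h \<Rightarrow> real" where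
  "form_q ip E x = integral\<^sup>L (spec_meas ip E x) (\<lambda>\<mu>. \<mu>)"

text \<open>Sesquilinear form a[x,y] = \<integral> \<mu> d\<langle>E(\<mu>)x,y\<rangle>, written via polarisation of the
  complex measure \<langle>E(.)x,y\<rangle> (valid for x, y in the form domain).\<close>

definition form :: "(complex \<Rightarrow> 'h::ab_group_add \<Rightarrow> 'h) \<Rightarrow> ('h \<Rightarrow> 'h \<Rightarrow> complex) \<Rightarrow>
    (real set \<Rightarrow> 'h \<Rightarrow> 'h) \<Rightarrow> 'h \<Rightarrow> 'h \<Rightarrow> complex" where
  "form sm ip E x y = (\<Sum>k<(4::nat). \<i> ^ k * complex_of_real (form_q ip E (x + sm (\<i> ^ k) y))) / 4"

text \<open>The self-adjoint operator A = \<integral> \<mu> dE(\<mu>), given by its graph: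
  dom A = {x. \<integral> mu^2 d\<langle>E(\<mu>)x,x\<rangle> < \<infinity>}, and Ax is the vector z with
  \<langle>z,y\<rangle> = \<integral> \<mu> d\<langle>E(\<mu>)x,y\<rangle> (tested on the dense subspace form_dom).\<close>

definition op_dom :: "('h \<Rightarrow> 'h \<Rightarrow> complex) \<Rightarrow> (real set \<Rightarrow> 'h \<Rightarrow> 'h) \<Rightarrow> 'h set" where
  "op_dom ip E = {x. integrable (spec_meas ip E x) (\<lambda>\<mu>. \<mu>\<^sup>2)}"

definition op_graph :: "(complex \<Rightarrow> 'h::ab_group_add \<Rightarrow> 'h) \<Rightarrow> ('h \<Rightarrow> 'h \<Rightarrow> complex) \<Rightarrow>
    (real set \<Rightarrow> 'h \<Rightarrow> 'h) \<Rightarrow> ('h \<times> 'h) set" where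
  "op_graph sm ip E = {(x, z). x \<in> op_dom ip E \<and> (\<forall>y\<in>form_dom ip E. ip z y = form sm ip E x y)}"

end

theory Submission
  imports Defs
begin

text \<open>Adding an eigenvector does not change the form at its eigenvalue: if \<open>T(\<lambda>)u = 0\<close>, then
  \<open>Re t(\<lambda>)[u, v] = 0\<close>, i.e. \<open>t(\<lambda>)[u + v] = t(\<lambda>)[u - v]\<close> by polarisation, and together with the
  parallelogram law and homogeneity this gives \<open>t(\<lambda>)[w + c u] = t(\<lambda>)[w]\<close>. Both laws hold for the
  form because they hold for the measures \<open>\<langle>E(\<cdot>)x, x\<rangle>\<close> and transfer to integrals. By (A3) and the
  intermediate value theorem, \<open>t(\<cdot>)[x] \<ge> 0\<close> propagates to the left and \<open>t(\<cdot>)[x] \<le> 0\<close> to the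
  right. For (i) one walks down from \<open>\<nu>\<close> to \<open>\<mu>\<close>, adding \<open>c\<^sub>j u\<^sub>j\<close> when passing \<open>\<lambda>\<^sub>j\<close>; (ii) is (i) for
  the reflected function \<open>\<lambda> \<mapsto> -t(-\<lambda>)\<close>.\<close>

lemma nn_integral_linear_relation:
  assumes sets: "sets M1 = sets M" "sets M2 = sets M" "sets N1 = sets M" "sets N2 = sets M"
    and relation: "\<And>A. A \<in> sets M \<Longrightarrow>
      emeasure M1 A + emeasure M2 A = k1 * emeasure N1 A + k2 * emeasure N2 A"
    and f: "f \<in> borel_measurable M"
  shows "(\<integral>\<^sup>+x. f x \<partial>M1) + (\<integral>\<^sup>+x. f x \<partial>M2) = k1 * (\<integral>\<^sup>+x. f x \<partial>N1) + k2 * (\<integral>\<^sup>+x. f x \<partial>N2)"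
  using f
proof induction
  case (cong f g)
  have "(\<integral>\<^sup>+x. f x \<partial>K) = (\<integral>\<^sup>+x. g x \<partial>K)" if "sets K = sets M" for K
    by (rule nn_integral_cong) (use cong sets_eq_imp_space_eq[OF that] in auto)
  with cong sets show ?case by simp
next
  case (set A)
  then show ?case using sets relation by simp
next
  case (mult u c)
  then have "u \<in> borel_measurable K" if "sets K = sets M" for K
    using that by (simp cong: measurable_cong_sets)
  with mult sets show ?case
    by (simp add: nn_integral_cmult distrib_left[symmetric] mult.left_commute)
next
  case (add u v)
  then have "u \<in> borel_measurable K" "v \<in> borel_measurable K" if "sets K = sets M" for K
    using that by (simp_all cong: measurable_cong_sets)
  with add sets show ?case
    by (simp add: nn_integral_add distrib_left add_ac)
next
  case (seq U)
  have U: "U i \<in> borel_measurable K" if "sets K = sets M" for K i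
    using seq that by (simp cong: measurable_cong_sets)
  have mono: "incseq (\<lambda>i. k * \<integral>\<^sup>+x. U i x \<partial>K)" if "sets K = sets M" for K k
    using \<open>incseq U\<close> U[OF that]
    by (auto simp: incseq_def le_fun_def intro!: nn_integral_mono mult_left_mono)
  have SUP: "k * (\<integral>\<^sup>+x. (SUP i. U i) x \<partial>K) = (SUP i. k * \<integral>\<^sup>+x. U i x \<partial>K)"
    if "sets K = sets M" for K k
    using \<open>incseq U\<close> nn_integral_monotone_convergence_SUP[of U K] U[OF that]
    by (simp add: image_comp SUP_mult_left_ennreal)
  have "(\<integral>\<^sup>+x. (SUP i. U i) x \<partial>M1) + (\<integral>\<^sup>+x. (SUP i. U i) x \<partial>M2)
      = 1 * (\<integral>\<^sup>+x. (SUP i. U i) x \<partial>M1) + 1 * (\<integral>\<^sup>+x. (SUP i. U i) x \<partial>M2)"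
    by simp
  also have "\<dots> = (SUP i. 1 * (\<integral>\<^sup>+x. U i x \<partial>M1) + 1 * (\<integral>\<^sup>+x. U i x \<partial>M2))"
    using sets by (simp only: SUP mono ennreal_SUP_add)
  also have "\<dots> = (SUP i. k1 * (\<integral>\<^sup>+x. U i x \<partial>N1) + k2 * (\<integral>\<^sup>+x. U i x \<partial>N2))"
    using seq.IH by simp
  also have "\<dots> = k1 * (\<integral>\<^sup>+x. (SUP i. U i) x \<partial>N1) + k2 * (\<integral>\<^sup>+x. (SUP i. U i) x \<partial>N2)"
    using sets by (simp only: SUP mono ennreal_SUP_add)
  finally show ?case .
qed

lemma enn2real_linear_relation:
  fixes a1 a2 b1 b2 :: ennreal
  assumes relation: "a1 + a2 = ennreal r1 * b1 + ennreal r2 * b2"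
    and "0 \<le> r1" "0 \<le> r2" "b1 < \<infinity>" "b2 < \<infinity>"
  shows "a1 < \<infinity>" "a2 < \<infinity>" "enn2real a1 + enn2real a2 = r1 * enn2real b1 + r2 * enn2real b2"
proof -
  have "a1 + a2 < \<infinity>"
    using assms by (simp add: ennreal_mult_less_top)
  then show "a1 < \<infinity>" "a2 < \<infinity>"
    by (simp_all add: less_top[symmetric])
  then have "enn2real a1 + enn2real a2 = enn2real (ennreal r1 * b1 + ennreal r2 * b2)"
    by (simp add: relation[symmetric] enn2real_plus)
  also have "\<dots> = r1 * enn2real b1 + r2 * enn2real b2"
    using assms by (simp add: enn2real_plus ennreal_mult_less_top enn2real_mult)
  finally show "enn2real a1 + enn2real a2 = r1 * enn2real b1 + r2 * enn2real b2" .
qed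

lemma integral_linear_relation:
  fixes f :: "'a \<Rightarrow> real"
  assumes sets: "sets M1 = sets M" "sets M2 = sets M" "sets N1 = sets M" "sets N2 = sets M"
    and relation: "\<And>A. A \<in> sets M \<Longrightarrow>
      emeasure M1 A + emeasure M2 A = ennreal r1 * emeasure N1 A + ennreal r2 * emeasure N2 A"
    and r: "0 \<le> r1" "0 \<le> r2"
    and f: "integrable N1 f" "integrable N2 f"
  shows "integrable M1 f" "integrable M2 f"
    and "integral\<^sup>L M1 f + integral\<^sup>L M2 f = r1 * integral\<^sup>L N1 f + r2 * integral\<^sup>L N2 f"
proof -
  have meas: "f \<in> borel_measurable K" if "sets K = sets M" for K
    using f(1) sets(3) that by (simp cong: measurable_cong_sets)
  have parts_meas: "(\<lambda>x. ennreal (f x)) \<in> borel_measurable M" "(\<lambda>x. ennreal (- f x)) \<in> borel_measurable M"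
    using meas[of M] by simp_all
  have fin: "(\<integral>\<^sup>+x. ennreal (f x) \<partial>K) < \<infinity>" "(\<integral>\<^sup>+x. ennreal (- f x) \<partial>K) < \<infinity>"
    if "integrable K f" for K
    using that by (simp_all add: real_integrable_def less_top)
  note pos = enn2real_linear_relation[OF nn_integral_linear_relation[OF sets relation parts_meas(1)]
      r fin(1)[OF f(1)] fin(1)[OF f(2)]]
   and neg = enn2real_linear_relation[OF nn_integral_linear_relation[OF sets relation parts_meas(2)]
      r fin(2)[OF f(1)] fin(2)[OF f(2)]]
  show "integrable M1 f" "integrable M2 f"
    using pos neg meas sets by (simp_all add: real_integrable_def less_top)
  then show "integral\<^sup>L M1 f + integral\<^sup>L M2 f = r1 * integral\<^sup>L N1 f + r2 * integral\<^sup>L N2 f"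
    using pos(3) neg(3) f by (simp add: real_lebesgue_integral_def right_diff_distrib)
qed

lemma biadditive_parallelogram:
  fixes b :: "'a::ab_group_add \<Rightarrow> 'a \<Rightarrow> 'b::comm_ring_1"
  assumes left: "\<And>y. Modules.additive (\<lambda>x. b x y)" and right: "\<And>x. Modules.additive (b x)"
  shows "b (x + y) (x + y) + b (x - y) (x - y) = 2 * b x x + 2 * b y y"
proof -
  have "b (x + y) (x + y) = b x x + b y x + (b x y + b y y)"
    and "b (x - y) (x - y) = b x x - b y x - (b x y - b y y)"
    by (simp_all only: Modules.additive.add[OF left] Modules.additive.add[OF right]
        Modules.additive.diff[OF left] Modules.additive.diff[OF right])
  then show ?thesis by (simp add: algebra_simps)
qed

locale complex_hilbert_space =
  fixes sm :: "complex \<Rightarrow> 'h::ab_group_add \<Rightarrow> 'h" and ip :: "'h \<Rightarrow> 'h \<Rightarrow> complex"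
  assumes complex_hilbert: "complex_hilbert sm ip"
begin

sublocale module sm
  by unfold_locales (use complex_hilbert in \<open>simp_all only: complex_hilbert_def\<close>)

lemma ip_add_left: "ip (x + y) z = ip x z + ip y z"
  using complex_hilbert unfolding complex_hilbert_def by (elim conjE allE) assumption

lemma ip_scale_left: "ip (sm a x) y = a * ip x y"
  using complex_hilbert unfolding complex_hilbert_def by (elim conjE allE) assumption

lemma ip_cnj: "ip y x = cnj (ip x y)"
  using complex_hilbert unfolding complex_hilbert_def by (elim conjE allE) assumption

lemma Re_ip_self_nonneg: "0 \<le> Re (ip x x)"
  using complex_hilbert unfolding complex_hilbert_def by (elim conjE allE) assumption

lemma additive_ip_left: "Modules.additive (\<lambda>x. ip x z)"
  by unfold_locales (rule ip_add_left)

lemma additive_ip_right: "Modules.additive (ip z)"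
  by unfold_locales (metis ip_cnj ip_add_left complex_cnj_add)

lemma ip_scale_right: "ip x (sm a y) = cnj a * ip x y"
  by (metis ip_cnj ip_scale_left complex_cnj_mult)

end

locale spectral_resolution = complex_hilbert_space sm ip
  for sm :: "complex \<Rightarrow> 'h::ab_group_add \<Rightarrow> 'h" and ip +
  fixes E :: "real set \<Rightarrow> 'h \<Rightarrow> 'h"
  assumes spectral_measure: "spectral_measure sm ip E"
begin

lemma E_add: "B \<in> sets borel \<Longrightarrow> E B (x + y) = E B x + E B y"
  using spectral_measure unfolding spectral_measure_def by (elim conjE) simp

lemma E_scale: "B \<in> sets borel \<Longrightarrow> E B (sm a x) = sm a (E B x)"
  using spectral_measure unfolding spectral_measure_def by (elim conjE) simp

lemma E_idem: "B \<in> sets borel \<Longrightarrow> E B (E B x) = E B x"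
  using spectral_measure unfolding spectral_measure_def by (elim conjE) simp

lemma E_selfadjoint: "B \<in> sets borel \<Longrightarrow> ip (E B x) y = ip x (E B y)"
  using spectral_measure unfolding spectral_measure_def by (elim conjE) simp

lemma E_empty: "E {} x = 0"
  using spectral_measure unfolding spectral_measure_def by (elim conjE) simp

lemma E_countably_additive: "range Bs \<subseteq> sets borel \<Longrightarrow> disjoint_family Bs \<Longrightarrow>
    (\<lambda>n. ip (E (Bs n) x) y) sums ip (E (\<Union>(range Bs)) x) y"
  using spectral_measure unfolding spectral_measure_def by (elim conjE) simp

lemma Re_ip_E_self_nonneg: "B \<in> sets borel \<Longrightarrow> 0 \<le> Re (ip (E B x) x)"
  using E_idem[of B x] E_selfadjoint[of B "E B x" x] Re_ip_self_nonneg[of "E B x"] by simp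

lemma Re_ip_E_parallelogram:
  assumes B: "B \<in> sets borel"
  shows "Re (ip (E B (x + y)) (x + y)) + Re (ip (E B (x - y)) (x - y))
       = 2 * Re (ip (E B x) x) + 2 * Re (ip (E B y) y)"
proof -
  have "Modules.additive (\<lambda>x. ip (E B x) y)" for y
    by unfold_locales (simp add: E_add[OF B] ip_add_left)
  then have "ip (E B (x + y)) (x + y) + ip (E B (x - y)) (x - y) = 2 * ip (E B x) x + 2 * ip (E B y) y"
    by (rule biadditive_parallelogram) (rule additive_ip_right)
  from arg_cong[where f = Re, OF this] show ?thesis by simp
qed

lemma Re_ip_E_scale:
  assumes B: "B \<in> sets borel"
  shows "Re (ip (E B (sm a x)) (sm a x)) = (cmod a)\<^sup>2 * Re (ip (E B x) x)"
proof -
  have "ip (E B (sm a x)) (sm a x) = (a * cnj a) * ip (E B x) x"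
    by (simp add: E_scale[OF B] ip_scale_left ip_scale_right)
  also have "a * cnj a = complex_of_real ((cmod a)\<^sup>2)"
    by (metis complex_norm_square)
  finally show ?thesis by simp
qed

lemma sets_spec_meas [simp]: "sets (spec_meas ip E x) = sets borel"
  using sets.sigma_sets_eq[of borel] unfolding spec_meas_def by (simp add: sets_measure_of)

lemma emeasure_spec_meas:
  assumes "B \<in> sets borel"
  shows "emeasure (spec_meas ip E x) B = ennreal (Re (ip (E B x) x))"
  unfolding spec_meas_def
proof (rule emeasure_measure_of_sigma[OF _ _ _ assms])
  show "sigma_algebra UNIV (sets borel)"
    by (metis sets.sigma_algebra_axioms space_borel)
  show "positive (sets borel) (\<lambda>B. ennreal (Re (ip (E B x) x)))"
    using Modules.additive.zero[OF additive_ip_left] by (simp add: positive_def E_empty)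
  show "countably_additive (sets borel) (\<lambda>B. ennreal (Re (ip (E B x) x)))"
  proof (rule countably_additiveI)
    fix A :: "nat \<Rightarrow> real set"
    assume A: "range A \<subseteq> sets borel" "disjoint_family A"
    have sums: "(\<lambda>n. Re (ip (E (A n) x) x)) sums Re (ip (E (\<Union>(range A)) x) x)"
      using sums_Re[OF E_countably_additive[OF A]] by simp
    have nonneg: "0 \<le> Re (ip (E (A n) x) x)" for n
      using A(1) Re_ip_E_self_nonneg by auto
    show "(\<Sum>i. ennreal (Re (ip (E (A i) x) x))) = ennreal (Re (ip (E (\<Union>(range A)) x) x))"
      using suminf_ennreal2[OF nonneg sums_summable[OF sums]] sums_unique[OF sums] by simp
  qed
qed

lemma finite_measure_spec_meas: "finite_measure (spec_meas ip E x)"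
  by (rule finite_measureI) (simp add: emeasure_spec_meas sets_eq_imp_space_eq[OF sets_spec_meas])

lemma spec_meas_zero: "spec_meas ip E 0 = null_measure borel"
  by (rule measure_eqI)
    (simp_all add: emeasure_spec_meas Modules.additive.zero[OF additive_ip_right])

lemma form_q_parallelogram:
  assumes x: "x \<in> form_dom ip E" and y: "y \<in> form_dom ip E"
  shows "x + y \<in> form_dom ip E" "x - y \<in> form_dom ip E"
    and "form_q ip E (x + y) + form_q ip E (x - y) = 2 * form_q ip E x + 2 * form_q ip E y"
proof -
  have "emeasure (spec_meas ip E (x + y)) A + emeasure (spec_meas ip E (x - y)) A
      = ennreal 2 * emeasure (spec_meas ip E x) A + ennreal 2 * emeasure (spec_meas ip E y) A"
    if A: "A \<in> sets borel" for A
    using Re_ip_E_parallelogram[OF A, of x y] Re_ip_E_self_nonneg[OF A]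
    by (simp add: emeasure_spec_meas[OF A] ennreal_plus[symmetric] ennreal_mult)
  from integral_linear_relation[where f = "\<lambda>t. t", OF _ _ _ _ this] x y
  show "x + y \<in> form_dom ip E" "x - y \<in> form_dom ip E"
    and "form_q ip E (x + y) + form_q ip E (x - y) = 2 * form_q ip E x + 2 * form_q ip E y"
    unfolding form_dom_def form_q_def by simp_all
qed

lemma form_q_scale:
  assumes x: "x \<in> form_dom ip E"
  shows "sm a x \<in> form_dom ip E" and "form_q ip E (sm a x) = (cmod a)\<^sup>2 * form_q ip E x"
proof -
  have relation: "emeasure (spec_meas ip E (sm a x)) A + emeasure (null_measure borel) A
      = ennreal ((cmod a)\<^sup>2) * emeasure (spec_meas ip E x) A + ennreal 0 * emeasure (null_measure borel) A"
    if A: "A \<in> sets borel" for A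
    using Re_ip_E_scale[OF A, of a x] Re_ip_E_self_nonneg[OF A]
    by (simp add: emeasure_spec_meas[OF A] ennreal_mult)
  have null: "integrable (null_measure borel) (\<lambda>t::real. t)"
    unfolding integrable_null_measure_iff by measurable
  have "integrable (spec_meas ip E x) (\<lambda>t. t)"
    using x unfolding form_dom_def by simp
  note scaled = integral_linear_relation[OF sets_spec_meas sets_null_measure sets_spec_meas
      sets_null_measure relation zero_le_power2 order_refl this null]
  show "sm a x \<in> form_dom ip E"
    using scaled(1) unfolding form_dom_def by simp
  show "form_q ip E (sm a x) = (cmod a)\<^sup>2 * form_q ip E x"
    using scaled(3) unfolding form_q_def by simp
qed

lemma form_q_zero: "form_q ip E 0 = 0"
  by (simp add: form_q_def spec_meas_zero)

lemma subspace_form_dom: "subspace (form_dom ip E)"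
proof (rule subspaceI)
  show "0 \<in> form_dom ip E"
    by (simp only: form_dom_def mem_Collect_eq spec_meas_zero integrable_null_measure_iff) measurable
qed (simp_all add: form_q_parallelogram form_q_scale)

lemma op_dom_subset_form_dom: "op_dom ip E \<subseteq> form_dom ip E"
proof
  fix x assume "x \<in> op_dom ip E"
  moreover have "(\<lambda>t. t) \<in> borel_measurable (spec_meas ip E x)"
    by (simp cong: measurable_cong_sets)
  ultimately show "x \<in> form_dom ip E"
    using finite_measure.square_integrable_imp_integrable[OF finite_measure_spec_meas]
    unfolding op_dom_def form_dom_def by blast
qed

lemma op_graph_in_form_dom: "(x, z) \<in> op_graph sm ip E \<Longrightarrow> x \<in> form_dom ip E"
  using op_dom_subset_form_dom unfolding op_graph_def by auto

lemma Re_form: "Re (form sm ip E x y) = (form_q ip E (x + y) - form_q ip E (x - y)) / 4"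
  unfolding form_def by (simp add: eval_nat_numeral)

lemma form_q_add_kernel_element:
  assumes u: "(u, 0) \<in> op_graph sm ip E" and w: "w \<in> form_dom ip E"
  shows "form_q ip E (w + sm c u) = form_q ip E w"
proof -
  have uD: "u \<in> form_dom ip E"
    using op_graph_in_form_dom[OF u] .
  have plus_minus: "form_q ip E (u + v) = form_q ip E (u - v)" if v: "v \<in> form_dom ip E" for v
  proof -
    have "form sm ip E u v = 0"
      using u v Modules.additive.zero[OF additive_ip_left] unfolding op_graph_def by auto
    then show ?thesis using Re_form[of u v] by simp
  qed
  have "form_q ip E u = 0"
    using form_q_parallelogram(3)[OF uD uD] plus_minus[OF uD] form_q_zero by simp
  then have q_cu: "form_q ip E (sm c u) = 0"
    using form_q_scale(2)[OF uD] by simp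
  have "form_q ip E (w + sm c u) = form_q ip E (w - sm c u)"
  proof (cases "c = 0")
    case False
    define v where "v = sm (inverse c) w"
    have v: "v \<in> form_dom ip E"
      unfolding v_def by (rule form_q_scale(1)[OF w])
    have plus: "w + sm c u = sm c (u + v)" and minus: "w - sm c u = sm (- c) (u - v)"
      using False by (simp_all add: v_def scale_right_distrib scale_right_diff_distrib)
    have uv: "u + v \<in> form_dom ip E" "u - v \<in> form_dom ip E"
      using form_q_parallelogram(1,2)[OF uD v] .
    have "form_q ip E (w + sm c u) = (cmod c)\<^sup>2 * form_q ip E (u + v)"
      by (simp only: plus form_q_scale(2)[OF uv(1)])
    also have "\<dots> = (cmod c)\<^sup>2 * form_q ip E (u - v)"
      using plus_minus[OF v] by simp
    also have "\<dots> = form_q ip E (w - sm c u)"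
      by (simp only: minus form_q_scale(2)[OF uv(2)] norm_minus_cancel)
    finally show ?thesis .
  qed simp
  moreover have "form_q ip E (w + sm c u) + form_q ip E (w - sm c u) = 2 * form_q ip E w"
    using form_q_parallelogram(3)[OF w form_q_scale(1)[OF uD]] q_cu by simp
  ultimately show ?thesis by simp
qed

end

lemma nonneg_propagates_left:
  fixes f :: "real \<Rightarrow> real"
  assumes "is_interval \<Delta>" "continuous_on \<Delta> f"
    and positive_left: "\<And>l0 l. l0 \<in> \<Delta> \<Longrightarrow> l \<in> \<Delta> \<Longrightarrow> f l0 = 0 \<Longrightarrow> l < l0 \<Longrightarrow> 0 < f l"
    and "a \<in> \<Delta>" "b \<in> \<Delta>" "a \<le> b" "0 \<le> f b"
  shows "0 \<le> f a"
proof (rule ccontr)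
  assume "\<not> 0 \<le> f a"
  have "{a..b} \<subseteq> \<Delta>"
    using assms by (auto intro: mem_is_interval_1_I)
  moreover obtain l0 where "a \<le> l0" "l0 \<le> b" "f l0 = 0"
    using IVT'[of f a 0 b] \<open>\<not> 0 \<le> f a\<close> assms continuous_on_subset[OF _ \<open>{a..b} \<subseteq> \<Delta>\<close>]
    by fastforce
  ultimately show False
    using positive_left[of l0 a] \<open>\<not> 0 \<le> f a\<close> assms by force
qed

lemma nonpos_propagates_right:
  fixes f :: "real \<Rightarrow> real"
  assumes "is_interval \<Delta>" "continuous_on \<Delta> f"
    and negative_right: "\<And>l0 l. l0 \<in> \<Delta> \<Longrightarrow> l \<in> \<Delta> \<Longrightarrow> f l0 = 0 \<Longrightarrow> l0 < l \<Longrightarrow> f l < 0"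
    and "a \<in> \<Delta>" "b \<in> \<Delta>" "a \<le> b" "f a \<le> 0"
  shows "f b \<le> 0"
proof (rule ccontr)
  assume "\<not> f b \<le> 0"
  have "{a..b} \<subseteq> \<Delta>"
    using assms by (auto intro: mem_is_interval_1_I)
  moreover obtain l0 where "a \<le> l0" "l0 \<le> b" "f l0 = 0"
    using IVT'[of f a 0 b] \<open>\<not> f b \<le> 0\<close> assms continuous_on_subset[OF _ \<open>{a..b} \<subseteq> \<Delta>\<close>]
    by fastforce
  ultimately show False
    using negative_right[of l0 b] \<open>\<not> f b \<le> 0\<close> assms by force
qed

lemma sign_change_family_propagation:
  fixes Q :: "real \<Rightarrow> 'a::zero \<Rightarrow> real"
  assumes interval: "is_interval \<Delta>" and zero: "\<And>l. l \<in> \<Delta> \<Longrightarrow> Q l 0 = 0"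
    and sign_change: "\<forall>x\<in>D - {0}. continuous_on \<Delta> (\<lambda>l. Q l x) \<and>
      (\<forall>l0\<in>\<Delta>. Q l0 x = 0 \<longrightarrow> (\<forall>l\<in>\<Delta>. l < l0 \<longrightarrow> Q l x > 0) \<and> (\<forall>l\<in>\<Delta>. l > l0 \<longrightarrow> Q l x < 0))"
    and "x \<in> D" "a \<in> \<Delta>" "b \<in> \<Delta>" "a \<le> b"
  shows "0 \<le> Q b x \<Longrightarrow> 0 \<le> Q a x" and "Q a x \<le> 0 \<Longrightarrow> Q b x \<le> 0"
proof -
  have "(0 \<le> Q b x \<longrightarrow> 0 \<le> Q a x) \<and> (Q a x \<le> 0 \<longrightarrow> Q b x \<le> 0)"
  proof (cases "x = 0")
    case True
    then show ?thesis
      using zero \<open>a \<in> \<Delta>\<close> \<open>b \<in> \<Delta>\<close> by simp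
  next
    case False
    then have "continuous_on \<Delta> (\<lambda>l. Q l x)"
      and "\<And>l0 l. l0 \<in> \<Delta> \<Longrightarrow> l \<in> \<Delta> \<Longrightarrow> Q l0 x = 0 \<Longrightarrow> l < l0 \<Longrightarrow> 0 < Q l x"
      and "\<And>l0 l. l0 \<in> \<Delta> \<Longrightarrow> l \<in> \<Delta> \<Longrightarrow> Q l0 x = 0 \<Longrightarrow> l0 < l \<Longrightarrow> Q l x < 0"
      using sign_change \<open>x \<in> D\<close> by blast+
    then show ?thesis
      using nonneg_propagates_left[OF interval] nonpos_propagates_right[OF interval] assms(5-)
      by blast
  qed
  then show "0 \<le> Q b x \<Longrightarrow> 0 \<le> Q a x" and "Q a x \<le> 0 \<Longrightarrow> Q b x \<le> 0"
    by blast+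
qed

lemma nonneg_preserved_by_invariant_shifts:
  fixes Q :: "real \<Rightarrow> 'a::comm_monoid_add \<Rightarrow> real" and m :: nat
  assumes "\<And>a b x. x \<in> D \<Longrightarrow> a \<in> \<Delta> \<Longrightarrow> b \<in> \<Delta> \<Longrightarrow> a \<le> b \<Longrightarrow> 0 \<le> Q b x \<Longrightarrow> 0 \<le> Q a x"
    and "\<And>j x. j \<in> {1..m} \<Longrightarrow> x \<in> D \<Longrightarrow> x + v j \<in> D \<and> Q (lam j) (x + v j) = Q (lam j) x"
    and "\<And>j. j \<in> {1..m} \<Longrightarrow> lam j \<in> \<Delta> \<and> \<mu> \<le> lam j \<and> lam j \<le> \<nu>"
    and "\<And>i j. 1 \<le> i \<Longrightarrow> i \<le> j \<Longrightarrow> j \<le> m \<Longrightarrow> lam i \<le> lam j"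
    and "\<mu> \<in> \<Delta>" "\<nu> \<in> \<Delta>" "\<mu> \<le> \<nu>" "y \<in> D" "0 \<le> Q \<nu> y"
  shows "0 \<le> Q \<mu> (y + (\<Sum>j=1..m. v j))"
  using assms
proof (induction m arbitrary: \<nu> y)
  case 0
  have "0 \<le> Q \<mu> y"
    using "0.prems"(1)[OF "0.prems"(8,5,6,7,9)] .
  then show ?case by simp
next
  case (Suc m)
  let ?k = "Suc m"
  have k: "?k \<in> {1..Suc m}" by simp
  have lam_k: "lam ?k \<in> \<Delta>" "\<mu> \<le> lam ?k" "lam ?k \<le> \<nu>"
    using Suc.prems(3)[OF k] by simp_all
  have "0 \<le> Q (lam ?k) y"
    using Suc.prems(1)[OF \<open>y \<in> D\<close> lam_k(1) \<open>\<nu> \<in> \<Delta>\<close> lam_k(3) \<open>0 \<le> Q \<nu> y\<close>] .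
  then have shifted: "y + v ?k \<in> D" "0 \<le> Q (lam ?k) (y + v ?k)"
    using Suc.prems(2)[OF k \<open>y \<in> D\<close>] by simp_all
  have "0 \<le> Q \<mu> ((y + v ?k) + (\<Sum>j=1..m. v j))"
  proof (rule Suc.IH[OF Suc.prems(1) _ _ _ \<open>\<mu> \<in> \<Delta>\<close> lam_k(1,2) shifted])
    show "x + v j \<in> D \<and> Q (lam j) (x + v j) = Q (lam j) x" if "j \<in> {1..m}" "x \<in> D" for j x
      using that Suc.prems(2)[of j x] by simp
    show "lam j \<in> \<Delta> \<and> \<mu> \<le> lam j \<and> lam j \<le> lam ?k" if "j \<in> {1..m}" for j
      using that Suc.prems(3)[of j] Suc.prems(4)[of j ?k] by simp
    show "lam i \<le> lam j" if "1 \<le> i" "i \<le> j" "j \<le> m" for i j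
      using that Suc.prems(4)[of i j] by simp
  qed
  then show ?case
    by (simp add: add_ac)
qed

lemma nonpos_preserved_by_invariant_shifts:
  fixes Q :: "real \<Rightarrow> 'a::comm_monoid_add \<Rightarrow> real" and m :: nat
  assumes up: "\<And>a b x. x \<in> D \<Longrightarrow> a \<in> \<Delta> \<Longrightarrow> b \<in> \<Delta> \<Longrightarrow> a \<le> b \<Longrightarrow> Q a x \<le> 0 \<Longrightarrow> Q b x \<le> 0"
    and shift: "\<And>j x. j \<in> {1..m} \<Longrightarrow> x \<in> D \<Longrightarrow> x + v j \<in> D \<and> Q (lam j) (x + v j) = Q (lam j) x"
    and lam: "\<And>j. j \<in> {1..m} \<Longrightarrow> lam j \<in> \<Delta> \<and> \<mu> \<le> lam j \<and> lam j \<le> \<nu>"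
    and sorted: "\<And>i j. 1 \<le> i \<Longrightarrow> i \<le> j \<Longrightarrow> j \<le> m \<Longrightarrow> lam i \<le> lam j"
    and "\<mu> \<in> \<Delta>" "\<nu> \<in> \<Delta>" "\<mu> \<le> \<nu>" "y \<in> D" "Q \<mu> y \<le> 0"
  shows "Q \<nu> (y + (\<Sum>j=1..m. v j)) \<le> 0"
proof -
  let ?rev = "\<lambda>j. m + 1 - j"
  have rev: "?rev j \<in> {1..m}" if "j \<in> {1..m}" for j
    using that by auto
  have "0 \<le> - Q (- (- \<nu>)) (y + (\<Sum>j=1..m. v (?rev j)))"
  proof (rule nonneg_preserved_by_invariant_shifts
      [where Q = "\<lambda>l x. - Q (- l) x" and \<Delta> = "uminus ` \<Delta>" and lam = "\<lambda>j. - lam (?rev j)"])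
    show "0 \<le> - Q (- a) x" if "x \<in> D" "a \<in> uminus ` \<Delta>" "b \<in> uminus ` \<Delta>" "a \<le> b" "0 \<le> - Q (- b) x"
      for a b x
      using that up[of x "- b" "- a"] by auto
    show "x + v (?rev j) \<in> D \<and> - Q (- (- lam (?rev j))) (x + v (?rev j)) = - Q (- (- lam (?rev j))) x"
      if "j \<in> {1..m}" "x \<in> D" for j x
      using shift[OF rev[OF that(1)] that(2)] by simp
    show "- lam (?rev j) \<in> uminus ` \<Delta> \<and> - \<nu> \<le> - lam (?rev j) \<and> - lam (?rev j) \<le> - \<mu>"
      if "j \<in> {1..m}" for j
      using lam[OF rev[OF that]] by simp
    show "- lam (?rev i) \<le> - lam (?rev j)" if "1 \<le> i" "i \<le> j" "j \<le> m" for i j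
      using that sorted[of "?rev j" "?rev i"] by simp
    show "- \<nu> \<in> uminus ` \<Delta>" "- \<mu> \<in> uminus ` \<Delta>" "- \<nu> \<le> - \<mu>" "y \<in> D" "0 \<le> - Q (- (- \<mu>)) y"
      using assms(5-) by simp_all
  qed
  moreover have "(\<Sum>j=1..m. v (?rev j)) = (\<Sum>j=1..m. v j)"
    using sum.atLeastAtMost_rev[of v 1 m] by simp
  ultimately show ?thesis by simp
qed

theorem lemma2p10:
  fixes sm :: "complex \<Rightarrow> 'h::ab_group_add \<Rightarrow> 'h"
    and ip :: "'h \<Rightarrow> 'h \<Rightarrow> complex"
    and E :: "real \<Rightarrow> real set \<Rightarrow> 'h \<Rightarrow> 'h"
    and \<Delta> :: "real set" and D :: "'h set"
    and m :: nat and lam :: "nat \<Rightarrow> real" and u :: "nat \<Rightarrow> 'h" and c :: "nat \<Rightarrow> complex"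
    and \<mu> \<nu> :: real and y :: 'h
  assumes H: "complex_hilbert sm ip"
    and interval: "is_interval \<Delta>"
    and A1: "\<forall>l\<in>\<Delta>. spectral_measure sm ip (E l)"
    and A2: "\<forall>l\<in>\<Delta>. form_dom ip (E l) = D"
    and A3: "\<forall>x\<in>D - {0}. continuous_on \<Delta> (\<lambda>l. form_q ip (E l) x) \<and>
               (\<forall>l0\<in>\<Delta>. form_q ip (E l0) x = 0 \<longrightarrow>
                  (\<forall>l\<in>\<Delta>. l < l0 \<longrightarrow> form_q ip (E l) x > 0) \<and>
                  (\<forall>l\<in>\<Delta>. l > l0 \<longrightarrow> form_q ip (E l) x < 0))"
    and eig: "\<forall>j\<in>{1..m}. lam j \<in> \<Delta> \<and> u j \<noteq> 0 \<and> (u j, 0) \<in> op_graph sm ip (E (lam j))"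
    and munu: "\<mu> \<in> \<Delta>" "\<nu> \<in> \<Delta>" "\<mu> \<le> \<nu>"
    and order: "\<forall>j\<in>{1..m}. \<mu> \<le> lam j \<and> lam j \<le> \<nu>"
               "\<forall>i j. 1 \<le> i \<longrightarrow> i \<le> j \<longrightarrow> j \<le> m \<longrightarrow> lam i \<le> lam j"
    and yD: "y \<in> D"
  shows "(form_q ip (E \<nu>) y \<ge> 0 \<longrightarrow>
            form_q ip (E \<mu>) (y + (\<Sum>j=1..m. sm (c j) (u j))) \<ge> 0) \<and>
         (form_q ip (E \<mu>) y \<le> 0 \<longrightarrow>
            form_q ip (E \<nu>) (y + (\<Sum>j=1..m. sm (c j) (u j))) \<le> 0)"
proof -
  have S: "spectral_resolution sm ip (E l)" if "l \<in> \<Delta>" for l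
    using H A1 that
    by (simp add: spectral_resolution_def spectral_resolution_axioms_def complex_hilbert_space_def)
  interpret complex_hilbert_space sm ip
    by (rule complex_hilbert_space.intro[OF H])
  have dom: "form_dom ip (E l) = D" if "l \<in> \<Delta>" for l
    using A2 that by blast
  have shift: "x + sm (c j) (u j) \<in> D \<and>
      form_q ip (E (lam j)) (x + sm (c j) (u j)) = form_q ip (E (lam j)) x"
    if "j \<in> {1..m}" "x \<in> D" for j x
  proof -
    have lam: "lam j \<in> \<Delta>" and kernel: "(u j, 0) \<in> op_graph sm ip (E (lam j))"
      using eig that(1) by auto
    interpret spectral_resolution sm ip "E (lam j)"
      by (rule S[OF lam])
    show ?thesis
      using form_q_add_kernel_element[OF kernel] op_graph_in_form_dom[OF kernel] subspace_form_dom
        subspace_add subspace_scale that(2) dom[OF lam] by simp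
  qed
  note sign = sign_change_family_propagation[where Q = "\<lambda>l. form_q ip (E l)",
      OF interval spectral_resolution.form_q_zero[OF S] A3]
  have lam: "lam j \<in> \<Delta> \<and> \<mu> \<le> lam j \<and> lam j \<le> \<nu>" if "j \<in> {1..m}" for j
    using eig order(1) that by blast
  have sorted: "lam i \<le> lam j" if "1 \<le> i" "i \<le> j" "j \<le> m" for i j
    using order(2) that by blast
  have "0 \<le> form_q ip (E \<mu>) (y + (\<Sum>j=1..m. sm (c j) (u j)))" if "0 \<le> form_q ip (E \<nu>) y"
    using sign(1) shift lam sorted munu yD that by (rule nonneg_preserved_by_invariant_shifts)
  moreover have "form_q ip (E \<nu>) (y + (\<Sum>j=1..m. sm (c j) (u j))) \<le> 0" if "form_q ip (E \<mu>) y \<le> 0"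
    using sign(2) shift lam sorted munu yD that by (rule nonpos_preserved_by_invariant_shifts)
  ultimately show ?thesis by blast
qed

end
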